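(* Fix $J\ge 2$ and sample sizes $n_1,\ldots,n_J$ with $\min_j n_j\ge 2$. For each dimension $d$, let $F_1,\ldots,F_J$ be distributions on $\mathbb{R}^d$ with finite second moments, means $\boldsymbol{\mu}_j$ and covariances $\boldsymbol{\Sigma}_j$, satisfying assumptions (A1) and (A2) stated in the context. Let $\mathbf{X}_{j1},\ldots,\mathbf{X}_{jn_j}\overset{iid}{\sim}F_j$, $j=1,\ldots,J$, be independent collections. Let $\Psi:[0,\infty)\to[0,\infty)$ be a continuous (decreasing) function not depending on $d$, and let $h=h_d$ satisfy $h^2/d\to C_0>0$ as $d\to\infty$. Define the empirical local Mahalanobis distances computed with the identity matrix, $$\widehat\beta_{h,j}(\mathbf{x})=\frac1{n_j}\sum_{i=1}^{n_j}\Psi\Big(\frac{\|\mathbf{x}-\mathbf{X}_{ji}\|^2}{h^2}\Big)\|\mathbf{x}-\mathbf{X}_{ji}\|^2,\qquad \widehat\gamma_j^h(\mathbf{x})=\begin{cases}\widehat\beta_{h,j}(\mathbf{x})& h>1,\\ \widehat\beta_{h,j}(\mathbf{x})/h^{d+2}& h\le1,\end{cases}$$ and $\widehat\Gamma_h(\mathbf{x})=(\widehat\gamma_1^h(\mathbf{x}),\ldots,\widehat\gamma_J^h(\mathbf{x}))$. For $1\le j,j'\le J$ set $\nu_{jj}^2=0$ and $\theta^{0}_{jj'}=\Psi\Big(\frac{\sigma_j^2+\sigma_{j'}^2+\nu_{jj'}^2}{C_0}\Big)(\sigma_j^2+\sigma_{j'}^2+\nu_{jj'}^2)$. Then, as $d\to\infty$: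 (a) for every $j$ and $i=1,\ldots,n_j$, $d^{-1}\widehat\Gamma_h(\mathbf{X}_{ji})\overset{P}{\to}\widetilde\Theta_j=(\widetilde\theta_{j1},\ldots,\widetilde\theta_{jJ})$, where $\widetilde\theta_{jj}=(1-1/n_j)\theta^{0}_{jj}$ and $\widetilde\theta_{jk}=\theta^0_{jk}$ for $k\ne j$; (b) for an observation $\mathbf{Z}\sim F_i$ independent of the samples, $d^{-1}\widehat\Gamma_h(\mathbf{Z})\overset{P}{\to}(\theta^0_{i1},\ldots,\theta^0_{iJ})$.
   Context: Assumption (A1): for all $1\le j,j'\le J$ and independent random vectors $\mathbf{X}\sim F_j$ and $\mathbf{Y},\mathbf{Z}\sim F_{j'}$ (with coordinates $X_i,Y_i,Z_i$), as $d\to\infty$, $\big|d^{-1}\sum_{i=1}^d(X_i-Y_i)(X_i-Z_i)-E\{d^{-1}\sum_{i=1}^d(X_i-Y_i)(X_i-Z_i)\}\big|\overset{P}{\to}0$ and $\big|d^{-1}\sum_{i=1}^d(X_i-Y_i)^2-E\{d^{-1}\sum_{i=1}^d(X_i-Y_i)^2\}\big|\overset{P}{\to}0$. Assumption (A2): for each $j$ there is a constant $\sigma_j^2$ with $d^{-1}\mathrm{trace}(\boldsymbol{\Sigma}_j)\to\sigma_j^2$, and for each $j\ne j'$ there is a constant $\nu_{jj'}^2$ with $d^{-1}\|\boldsymbol{\mu}_j-\boldsymbol{\mu}_{j'}\|^2\to\nu_{jj'}^2$, as $d\to\infty$. The sample sizes $n_j$ stay fixed as $d\to\infty$. *)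

theory Defs
  imports "HOL-Probability.Probability"
begin

text \<open>Vectors in R^d are represented as extensional functions on the index set {..<d},
  i.e. elements of the space of the product measure below.\<close>

definition vecspace :: "nat \<Rightarrow> (nat \<Rightarrow> real) measure" where
  "vecspace d = PiM {..<d} (\<lambda>_. borel)"

definition sqdist :: "nat \<Rightarrow> (nat \<Rightarrow> real) \<Rightarrow> (nat \<Rightarrow> real) \<Rightarrow> real" where
  "sqdist d x y = (\<Sum>k<d. (x k - y k)^2)"

definition conv_prob :: "(nat \<Rightarrow> 'b measure) \<Rightarrow> (nat \<Rightarrow> 'b \<Rightarrow> real) \<Rightarrow> real \<Rightarrow> bool" where
  "conv_prob P Y c \<longleftrightarrow>
     (\<forall>e>0. ((\<lambda>d. measure (P d) {w \<in> space (P d). e < \<bar>Y d w - c\<bar>}) \<longlongrightarrow> 0) sequentially)"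

definition beta_hat :: "(real \<Rightarrow> real) \<Rightarrow> real \<Rightarrow> nat \<Rightarrow> nat \<Rightarrow> (nat \<Rightarrow> nat \<Rightarrow> real)
    \<Rightarrow> (nat \<Rightarrow> real) \<Rightarrow> real" where
  "beta_hat \<Psi> h d nj pts x =
     (1 / real nj) * (\<Sum>i=1..nj. \<Psi> (sqdist d x (pts i) / h^2) * sqdist d x (pts i))"

definition gamma_hat :: "(real \<Rightarrow> real) \<Rightarrow> real \<Rightarrow> nat \<Rightarrow> nat \<Rightarrow> (nat \<Rightarrow> nat \<Rightarrow> real)
    \<Rightarrow> (nat \<Rightarrow> real) \<Rightarrow> real" where
  "gamma_hat \<Psi> h d nj pts x =
     (if h > 1 then beta_hat \<Psi> h d nj pts x else beta_hat \<Psi> h d nj pts x / h ^ (d + 2))"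

definition theta0 :: "(real \<Rightarrow> real) \<Rightarrow> real \<Rightarrow> (nat \<Rightarrow> real) \<Rightarrow> (nat \<Rightarrow> nat \<Rightarrow> real)
    \<Rightarrow> nat \<Rightarrow> nat \<Rightarrow> real" where
  "theta0 \<Psi> C0 sigma2 nu2 j j' =
     (let s = sigma2 j + sigma2 j' + (if j = j' then 0 else nu2 j j') in \<Psi> (s / C0) * s)"

definition mean_vec :: "(nat \<Rightarrow> real) measure \<Rightarrow> nat \<Rightarrow> nat \<Rightarrow> real" where
  "mean_vec F d k = (\<integral>x. x k \<partial>F)"

definition trace_cov :: "(nat \<Rightarrow> real) measure \<Rightarrow> nat \<Rightarrow> real" where
  "trace_cov F d = (\<Sum>k<d. (\<integral>x. (x k - mean_vec F d k)^2 \<partial>F))"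

end

(*
  For independent X ~ F_j and Y ~ F_k, E ||X - Y||^2 = tr Sigma_j + tr Sigma_k + ||mu_j - mu_k||^2,
  so the concentration (A1) and the limits (A2) give ||X - Y||^2 / d --> sigma_j^2 + sigma_k^2 + nu_jk^2
  in probability.  Since h^2 / d --> C0 > 0, eventually h > 1, and then gamma_hat(x) / d is the sample
  average of Psi((||x - X_l||^2 / d) (d / h^2)) ||x - X_l||^2 / d; as d / h^2 --> 1 / C0, the continuous
  mapping theorem yields the limits.  When x is itself the sample point X_ji, the summand l = i vanishes
  identically, which produces the factor 1 - 1/n_j.

  Only the second half of (A1) is used.
*)
theory Submission
  imports Defs
begin

section \<open>Convergence in probability\<close>

lemma conv_prob_deviation_split:
  assumes P: "\<And>d. prob_space (P d)"
    and U: "\<And>d. U d \<in> borel_measurable (P d)" and V: "\<And>d. V d \<in> borel_measurable (P d)"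
    and cU: "conv_prob P U a" and cV: "conv_prob P V b"
    and split: "\<And>e. 0 < e \<Longrightarrow> \<exists>\<delta>>0. \<forall>d. \<forall>\<omega>\<in>space (P d).
      e < \<bar>Y d \<omega> - c\<bar> \<longrightarrow> \<delta> < \<bar>U d \<omega> - a\<bar> \<or> \<delta> < \<bar>V d \<omega> - b\<bar>"
  shows "conv_prob P Y c"
  unfolding conv_prob_def
proof (intro allI impI)
  fix e :: real assume "0 < e"
  then obtain \<delta> where "0 < \<delta>" and \<delta>: "\<And>d. \<forall>\<omega>\<in>space (P d).
      e < \<bar>Y d \<omega> - c\<bar> \<longrightarrow> \<delta> < \<bar>U d \<omega> - a\<bar> \<or> \<delta> < \<bar>V d \<omega> - b\<bar>"
    using split by blast
  define BU where "BU d = {\<omega> \<in> space (P d). \<delta> < \<bar>U d \<omega> - a\<bar>}" for d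
  define BV where "BV d = {\<omega> \<in> space (P d). \<delta> < \<bar>V d \<omega> - b\<bar>}" for d
  have tails: "((\<lambda>d. measure (P d) (BU d) + measure (P d) (BV d)) \<longlongrightarrow> 0) sequentially"
    unfolding BU_def BV_def using \<open>0 < \<delta>\<close>
    by (intro tendsto_add_zero cU[unfolded conv_prob_def, rule_format] cV[unfolded conv_prob_def, rule_format])
  have "measure (P d) {\<omega> \<in> space (P d). e < \<bar>Y d \<omega> - c\<bar>} \<le> measure (P d) (BU d) + measure (P d) (BV d)" for d
  proof -
    interpret prob_space "P d" by (rule P)
    have events: "BU d \<in> events" "BV d \<in> events"
      unfolding BU_def BV_def using U[of d] V[of d] by measurable
    have "measure (P d) {\<omega> \<in> space (P d). e < \<bar>Y d \<omega> - c\<bar>} \<le> measure (P d) (BU d \<union> BV d)"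
      using events \<delta>[of d] unfolding BU_def BV_def by (intro finite_measure_mono) auto
    also have "\<dots> \<le> measure (P d) (BU d) + measure (P d) (BV d)"
      using events by (rule measure_Un_le)
    finally show ?thesis .
  qed
  then show "((\<lambda>d. measure (P d) {\<omega> \<in> space (P d). e < \<bar>Y d \<omega> - c\<bar>}) \<longlongrightarrow> 0) sequentially"
    by (intro tendsto_sandwich[OF _ _ tendsto_const tails] always_eventually allI) simp_all
qed

lemma conv_prob_continuous_map:
  fixes g :: "real \<Rightarrow> real \<Rightarrow> real"
  assumes P: "\<And>d. prob_space (P d)"
    and U: "\<And>d. U d \<in> borel_measurable (P d)" and V: "\<And>d. V d \<in> borel_measurable (P d)"
    and cU: "conv_prob P U a" and cV: "conv_prob P V b"
    and g: "isCont (\<lambda>p. g (fst p) (snd p)) (a, b)"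
  shows "conv_prob P (\<lambda>d \<omega>. g (U d \<omega>) (V d \<omega>)) (g a b)"
proof (rule conv_prob_deviation_split[OF P U V cU cV])
  fix e :: real assume "0 < e"
  then obtain \<delta> where "0 < \<delta>"
    and \<delta>: "\<And>p. dist p (a, b) < \<delta> \<Longrightarrow> dist (g (fst p) (snd p)) (g a b) < e"
    using g unfolding continuous_at_eps_delta by fastforce
  have "e < \<bar>g u v - g a b\<bar> \<Longrightarrow> \<delta>/3 < \<bar>u - a\<bar> \<or> \<delta>/3 < \<bar>v - b\<bar>" for u v
  proof (rule ccontr)
    assume "e < \<bar>g u v - g a b\<bar>" "\<not> (\<delta>/3 < \<bar>u - a\<bar> \<or> \<delta>/3 < \<bar>v - b\<bar>)"
    moreover from this(2) have "dist (u, v) (a, b) < \<delta>"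
      using sqrt_sum_squares_le_sum_abs[of "u - a" "v - b"] \<open>0 < \<delta>\<close>
      by (simp add: dist_Pair_Pair dist_real_def)
    ultimately show False
      using \<delta>[of "(u, v)"] by (simp add: dist_real_def)
  qed
  moreover have "0 < \<delta>/3" using \<open>0 < \<delta>\<close> by simp
  ultimately show "\<exists>\<delta>>0. \<forall>d. \<forall>\<omega>\<in>space (P d). e < \<bar>g (U d \<omega>) (V d \<omega>) - g a b\<bar> \<longrightarrow>
      \<delta> < \<bar>U d \<omega> - a\<bar> \<or> \<delta> < \<bar>V d \<omega> - b\<bar>"
    by blast
qed

lemma conv_prob_zero: "conv_prob P (\<lambda>d \<omega>. 0) 0"
  unfolding conv_prob_def by simp

lemma conv_prob_add:
  assumes "\<And>d. prob_space (P d)"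
    and "\<And>d. U d \<in> borel_measurable (P d)" and "\<And>d. V d \<in> borel_measurable (P d)"
    and "conv_prob P U a" and "conv_prob P V b"
  shows "conv_prob P (\<lambda>d \<omega>. U d \<omega> + V d \<omega>) (a + b)"
proof -
  have "isCont (\<lambda>p. fst p + snd p) (a, b)"
    by (intro continuous_intros)
  from conv_prob_continuous_map[where g = "(+)", OF assms this] show ?thesis .
qed

lemma conv_prob_divide_const:
  assumes "\<And>d. prob_space (P d)" and "\<And>d. U d \<in> borel_measurable (P d)" and "conv_prob P U a"
  shows "conv_prob P (\<lambda>d \<omega>. U d \<omega> / r) (a / r)"
proof -
  have "isCont (\<lambda>p. fst p * inverse r) (a, 0)"
    by (intro continuous_intros)
  from conv_prob_continuous_map[where g = "\<lambda>u v. u * inverse r", OF assms(1,2) _ assms(3) conv_prob_zero this]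
  show ?thesis
    unfolding divide_inverse by simp
qed

lemma conv_prob_sum:
  assumes P: "\<And>d. prob_space (P d)" and "finite L"
    and "\<And>l d. l \<in> L \<Longrightarrow> U l d \<in> borel_measurable (P d)"
    and "\<And>l. l \<in> L \<Longrightarrow> conv_prob P (U l) (a l)"
  shows "conv_prob P (\<lambda>d \<omega>. \<Sum>l\<in>L. U l d \<omega>) (\<Sum>l\<in>L. a l)"
  using assms(2-)
proof (induction L rule: finite_induct)
  case empty
  show ?case using conv_prob_zero by simp
next
  case (insert l L)
  then have "conv_prob P (\<lambda>d \<omega>. U l d \<omega> + (\<Sum>l\<in>L. U l d \<omega>)) (a l + (\<Sum>l\<in>L. a l))"
    by (intro conv_prob_add[OF P] borel_measurable_sum) auto
  with insert show ?case by simp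
qed

lemma conv_prob_deterministic:
  assumes "(t \<longlongrightarrow> c) sequentially"
  shows "conv_prob P (\<lambda>d \<omega>. t d) c"
  unfolding conv_prob_def
proof (intro allI impI tendsto_eventually)
  fix e :: real assume "e > 0"
  with assms have "eventually (\<lambda>d. \<bar>t d - c\<bar> < e) sequentially"
    by (auto simp: tendsto_iff dist_real_def)
  then show "eventually (\<lambda>d. measure (P d) {\<omega> \<in> space (P d). e < \<bar>t d - c\<bar>} = 0) sequentially"
    by eventually_elim auto
qed

lemma conv_prob_eventually_cong:
  assumes "eventually (\<lambda>d. \<forall>\<omega>\<in>space (P d). U d \<omega> = V d \<omega>) sequentially"
  shows "conv_prob P U c \<longleftrightarrow> conv_prob P V c"
proof -
  have "eventually (\<lambda>d. measure (P d) {\<omega> \<in> space (P d). e < \<bar>U d \<omega> - c\<bar>}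
      = measure (P d) {\<omega> \<in> space (P d). e < \<bar>V d \<omega> - c\<bar>}) sequentially" for e
    using assms by eventually_elim (metis (no_types, lifting))
  from tendsto_cong[OF this] show ?thesis
    unfolding conv_prob_def by simp
qed

lemma conv_prob_distr:
  assumes W: "\<And>d. W d \<in> measurable (P d) (N d)" and f: "\<And>d. f d \<in> borel_measurable (N d)"
  shows "conv_prob (\<lambda>d. distr (P d) (N d) (W d)) f c \<longleftrightarrow> conv_prob P (\<lambda>d \<omega>. f d (W d \<omega>)) c"
proof -
  have "measure (distr (P d) (N d) (W d)) {x \<in> space (distr (P d) (N d) (W d)). e < \<bar>f d x - c\<bar>}
      = measure (P d) {\<omega> \<in> space (P d). e < \<bar>f d (W d \<omega>) - c\<bar>}" for d e
  proof -
    have "{x \<in> space (N d). e < \<bar>f d x - c\<bar>} \<in> sets (N d)"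
      using f[of d] by measurable
    then show ?thesis
      using measurable_space[OF W[of d]]
      by (auto simp: measure_distr[OF W] intro!: arg_cong2[where f = measure])
  qed
  then show ?thesis
    unfolding conv_prob_def by simp
qed

section \<open>Squared distances of independent random vectors\<close>

lemma measurable_vecspace_component: "k < d \<Longrightarrow> (\<lambda>x. x k) \<in> borel_measurable (vecspace d)"
  unfolding vecspace_def by (rule measurable_component_singleton) simp

lemma sqdist_self [simp]: "sqdist d x x = 0"
  by (simp add: sqdist_def)

lemma sqdist_nonneg: "0 \<le> sqdist d x y"
  by (simp add: sqdist_def sum_nonneg)

lemma borel_measurable_sqdist:
  assumes "X \<in> measurable M (vecspace d)" "Y \<in> measurable M (vecspace d)"
  shows "(\<lambda>\<omega>. sqdist d (X \<omega>) (Y \<omega>)) \<in> borel_measurable M"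
proof -
  have "(\<lambda>(x, y). sqdist d x y) \<in> borel_measurable (vecspace d \<Otimes>\<^sub>M vecspace d)"
    unfolding sqdist_def vecspace_def by measurable
  from measurable_compose[OF measurable_Pair[OF assms] this] show ?thesis by simp
qed

lemma (in prob_space) indep_vars_imp_indep_var:
  assumes ind: "indep_vars M' X I" and "a \<in> I" "b \<in> I" "a \<noteq> b"
  shows "indep_var (M' a) (X a) (M' b) (X b)"
proof -
  have "indep_var (PiM {a} M') (\<lambda>\<omega>. restrict (\<lambda>i. X i \<omega>) {a}) (PiM {b} M') (\<lambda>\<omega>. restrict (\<lambda>i. X i \<omega>) {b})"
    by (rule indep_var_restrict[OF ind]) (use assms in auto)
  then have "indep_var (M' a) ((\<lambda>f. f a) \<circ> (\<lambda>\<omega>. restrict (\<lambda>i. X i \<omega>) {a}))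
      (M' b) ((\<lambda>f. f b) \<circ> (\<lambda>\<omega>. restrict (\<lambda>i. X i \<omega>) {b}))"
    by (rule indep_var_compose) (auto intro: measurable_component_singleton)
  then show ?thesis by (simp add: comp_def)
qed

lemma (in prob_space) expectation_sq_diff_indep:
  fixes a b :: "'a \<Rightarrow> real"
  assumes a: "integrable M a" "integrable M (\<lambda>\<omega>. (a \<omega>)^2)"
    and b: "integrable M b" "integrable M (\<lambda>\<omega>. (b \<omega>)^2)"
    and ind: "indep_var borel a borel b"
  shows "integrable M (\<lambda>\<omega>. (a \<omega> - b \<omega>)^2)"
    and "expectation (\<lambda>\<omega>. (a \<omega> - b \<omega>)^2) = variance a + variance b + (expectation a - expectation b)^2"
proof -
  have ab: "integrable M (\<lambda>\<omega>. a \<omega> * b \<omega>)"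
    by (rule indep_var_integrable[OF ind a(1) b(1)])
  have expand: "(\<lambda>\<omega>. (a \<omega> - b \<omega>)^2) = (\<lambda>\<omega>. (a \<omega>)^2 - 2 * (a \<omega> * b \<omega>) + (b \<omega>)^2)"
    by (auto simp: power2_eq_square algebra_simps)
  show "integrable M (\<lambda>\<omega>. (a \<omega> - b \<omega>)^2)"
    unfolding expand using a b ab by auto
  have "expectation (\<lambda>\<omega>. (a \<omega> - b \<omega>)^2)
      = expectation (\<lambda>\<omega>. (a \<omega>)^2) - 2 * expectation (\<lambda>\<omega>. a \<omega> * b \<omega>) + expectation (\<lambda>\<omega>. (b \<omega>)^2)"
    unfolding expand using a b ab by simp
  then show "expectation (\<lambda>\<omega>. (a \<omega> - b \<omega>)^2) = variance a + variance b + (expectation a - expectation b)^2"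
    using variance_eq[OF a] variance_eq[OF b] indep_var_lebesgue_integral[OF ind a(1) b(1)]
    by (simp add: power2_eq_square algebra_simps)
qed

lemma (in prob_space) integrable_component_sq:
  assumes X: "X \<in> measurable M (vecspace d)" and "k < d"
    and "integrable (distr M (vecspace d) X) (\<lambda>x. (x k)^2)"
  shows "integrable M (\<lambda>\<omega>. (X \<omega> k)^2)"
proof -
  have "(\<lambda>x. (x k)^2) \<in> borel_measurable (vecspace d)"
    using measurable_vecspace_component[OF \<open>k < d\<close>] by measurable
  from integrable_distr_eq[OF X this] assms(3) show ?thesis by simp
qed

lemma (in prob_space) mean_vec_distr:
  assumes "X \<in> measurable M (vecspace d)" "k < d"
  shows "mean_vec (distr M (vecspace d) X) d k = expectation (\<lambda>\<omega>. X \<omega> k)"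
  unfolding mean_vec_def using assms(1) measurable_vecspace_component[OF assms(2)]
  by (rule integral_distr)

lemma (in prob_space) trace_cov_distr:
  assumes "X \<in> measurable M (vecspace d)"
  shows "trace_cov (distr M (vecspace d) X) d = (\<Sum>k<d. variance (\<lambda>\<omega>. X \<omega> k))"
proof -
  have "(\<integral>x. (x k - mean_vec (distr M (vecspace d) X) d k)^2 \<partial>distr M (vecspace d) X)
      = variance (\<lambda>\<omega>. X \<omega> k)" if "k < d" for k
    using assms measurable_vecspace_component[OF that]
    by (simp add: integral_distr mean_vec_distr[OF assms that])
  then show ?thesis
    unfolding trace_cov_def by simp
qed

lemma (in prob_space) expectation_sqdist_indep:
  assumes X: "X \<in> measurable M (vecspace d)" and Y: "Y \<in> measurable M (vecspace d)"
    and ind: "indep_var (vecspace d) X (vecspace d) Y"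
    and X2: "\<And>k. k < d \<Longrightarrow> integrable M (\<lambda>\<omega>. (X \<omega> k)^2)"
    and Y2: "\<And>k. k < d \<Longrightarrow> integrable M (\<lambda>\<omega>. (Y \<omega> k)^2)"
  shows "expectation (\<lambda>\<omega>. sqdist d (X \<omega>) (Y \<omega>))
    = trace_cov (distr M (vecspace d) X) d + trace_cov (distr M (vecspace d) Y) d
      + (\<Sum>k<d. (mean_vec (distr M (vecspace d) X) d k - mean_vec (distr M (vecspace d) Y) d k)^2)"
proof -
  have coordinate: "integrable M (\<lambda>\<omega>. (X \<omega> k - Y \<omega> k)^2) \<and>
      expectation (\<lambda>\<omega>. (X \<omega> k - Y \<omega> k)^2) = variance (\<lambda>\<omega>. X \<omega> k) + variance (\<lambda>\<omega>. Y \<omega> k)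
        + (expectation (\<lambda>\<omega>. X \<omega> k) - expectation (\<lambda>\<omega>. Y \<omega> k))^2" if "k < d" for k
  proof -
    have comp: "(\<lambda>x. x k) \<in> borel_measurable (vecspace d)"
      using that by (rule measurable_vecspace_component)
    have "indep_var borel ((\<lambda>x. x k) \<circ> X) borel ((\<lambda>x. x k) \<circ> Y)"
      by (rule indep_var_compose[OF ind comp comp])
    moreover have "integrable M (\<lambda>\<omega>. X \<omega> k)"
      using measurable_compose[OF X comp] X2[OF that] by (rule square_integrable_imp_integrable)
    moreover have "integrable M (\<lambda>\<omega>. Y \<omega> k)"
      using measurable_compose[OF Y comp] Y2[OF that] by (rule square_integrable_imp_integrable)
    ultimately show ?thesis
      using expectation_sq_diff_indep[of "\<lambda>\<omega>. X \<omega> k" "\<lambda>\<omega>. Y \<omega> k"] X2[OF that] Y2[OF that]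
      by (simp add: comp_def)
  qed
  have "expectation (\<lambda>\<omega>. sqdist d (X \<omega>) (Y \<omega>)) = (\<Sum>k<d. expectation (\<lambda>\<omega>. (X \<omega> k - Y \<omega> k)^2))"
    unfolding sqdist_def using coordinate by (intro Bochner_Integration.integral_sum) auto
  also have "\<dots> = (\<Sum>k<d. variance (\<lambda>\<omega>. X \<omega> k) + variance (\<lambda>\<omega>. Y \<omega> k)
        + (expectation (\<lambda>\<omega>. X \<omega> k) - expectation (\<lambda>\<omega>. Y \<omega> k))^2)"
    using coordinate by (intro sum.cong) auto
  also have "\<dots> = trace_cov (distr M (vecspace d) X) d + trace_cov (distr M (vecspace d) Y) d
      + (\<Sum>k<d. (mean_vec (distr M (vecspace d) X) d k - mean_vec (distr M (vecspace d) Y) d k)^2)"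
    unfolding trace_cov_distr[OF X] trace_cov_distr[OF Y] sum.distrib[symmetric]
    by (intro sum.cong refl) (simp add: mean_vec_distr[OF X] mean_vec_distr[OF Y])
  finally show ?thesis .
qed

lemma (in prob_space) integral_sqdist_indep:
  assumes X: "X \<in> measurable M (vecspace d)" and Y: "Y \<in> measurable M (vecspace d)"
    and ind: "indep_var (vecspace d) X (vecspace d) Y"
    and X2: "\<And>k. k < d \<Longrightarrow> integrable (distr M (vecspace d) X) (\<lambda>x. (x k)^2)"
    and Y2: "\<And>k. k < d \<Longrightarrow> integrable (distr M (vecspace d) Y) (\<lambda>x. (x k)^2)"
  shows "(\<integral>(x, y). (1 / real d) * (\<Sum>k<d. (x k - y k)^2) \<partial>(distr M (vecspace d) X \<Otimes>\<^sub>M distr M (vecspace d) Y))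
    = (trace_cov (distr M (vecspace d) X) d + trace_cov (distr M (vecspace d) Y) d
      + (\<Sum>k<d. (mean_vec (distr M (vecspace d) X) d k - mean_vec (distr M (vecspace d) Y) d k)^2)) / real d"
proof -
  have XY: "(\<lambda>\<omega>. (X \<omega>, Y \<omega>)) \<in> measurable M (vecspace d \<Otimes>\<^sub>M vecspace d)"
    using X Y by measurable
  have f: "(\<lambda>(x, y). (1 / real d) * (\<Sum>k<d. (x k - y k)^2)) \<in> borel_measurable (vecspace d \<Otimes>\<^sub>M vecspace d)"
    unfolding vecspace_def by measurable
  have "distr M (vecspace d) X \<Otimes>\<^sub>M distr M (vecspace d) Y = distr M (vecspace d \<Otimes>\<^sub>M vecspace d) (\<lambda>\<omega>. (X \<omega>, Y \<omega>))"
    using ind unfolding indep_var_distribution_eq by simp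
  then have "(\<integral>(x, y). (1 / real d) * (\<Sum>k<d. (x k - y k)^2) \<partial>(distr M (vecspace d) X \<Otimes>\<^sub>M distr M (vecspace d) Y))
      = (\<integral>\<omega>. (1 / real d) * (\<Sum>k<d. (X \<omega> k - Y \<omega> k)^2) \<partial>M)"
    using integral_distr[OF XY f] by simp
  also have "\<dots> = expectation (\<lambda>\<omega>. sqdist d (X \<omega>) (Y \<omega>)) / real d"
    by (simp add: sqdist_def)
  finally show ?thesis
    using expectation_sqdist_indep[OF X Y ind integrable_component_sq[OF X _ X2] integrable_component_sq[OF Y _ Y2]]
    by simp
qed

section \<open>The kernel-weighted distance\<close>

lemma gamma_hat_div_dim:
  assumes "1 < h" "0 < d"
  shows "gamma_hat \<Psi> h d N pts x / real d
    = (\<Sum>l=1..N. \<Psi> (sqdist d x (pts l) / real d * (real d / h^2)) * (sqdist d x (pts l) / real d)) / real N"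
  using assms unfolding gamma_hat_def beta_hat_def
  by (simp add: sum_divide_distrib mult.commute)

locale kernel_bandwidth =
  fixes \<Psi> :: "real \<Rightarrow> real" and h :: "nat \<Rightarrow> real" and C0 :: real
  assumes Psi_cont: "continuous_on {0..} \<Psi>"
    and h_pos: "\<And>d. 0 < h d" and C0_pos: "0 < C0"
    and h_lim: "((\<lambda>d. (h d)^2 / real d) \<longlongrightarrow> C0) sequentially"
begin

lemma eventually_bandwidth_gt_1: "eventually (\<lambda>d. 1 < h d) sequentially"
proof -
  have "filterlim (\<lambda>d. (h d)^2 / real d * real d) at_top sequentially"
    by (rule filterlim_tendsto_pos_mult_at_top[OF h_lim C0_pos filterlim_real_sequentially])
  then have "eventually (\<lambda>d. 1 < (h d)^2 / real d * real d) sequentially"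
    by (simp add: filterlim_at_top_dense)
  with eventually_gt_at_top[of 0] show ?thesis
  proof eventually_elim
    case (elim d)
    then have "1^2 < (h d)^2" by simp
    then show ?case using h_pos[of d] power2_less_imp_less[of 1 "h d"] by simp
  qed
qed

lemma dim_over_bandwidth_sq_tendsto: "((\<lambda>d. real d / (h d)^2) \<longlongrightarrow> 1 / C0) sequentially"
  using tendsto_inverse[OF h_lim] C0_pos by (simp add: inverse_eq_divide)

text \<open>\<open>\<Psi>\<close> is only continuous on \<open>[0, \<infinity>)\<close>, but the continuous mapping theorem needs continuity
  at limits on the boundary (distance \<open>0\<close> from a sample point to itself); extending \<open>\<Psi>\<close> by
  \<open>\<Psi> 0\<close> to the left changes nothing on the nonnegative arguments that occur.\<close>

lemma continuous_on_kernel_extension: "continuous_on UNIV (\<lambda>t. \<Psi> (max 0 t))"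
  by (rule continuous_on_compose2[OF Psi_cont]) (auto intro!: continuous_intros)

lemma conv_prob_kernel_term:
  fixes M :: "nat \<Rightarrow> 'a measure"
  assumes M: "\<And>d. prob_space (M d)" and U: "\<And>d. U d \<in> borel_measurable (M d)"
    and U_lim: "conv_prob M U c" and "0 \<le> c"
  shows "conv_prob M (\<lambda>d \<omega>. \<Psi> (max 0 (U d \<omega> * (real d / (h d)^2))) * U d \<omega>) (\<Psi> (c / C0) * c)"
proof -
  have "isCont (\<lambda>p. \<Psi> (max 0 (fst p * snd p)) * fst p) p" for p
  proof -
    have "isCont (\<lambda>p. fst p * snd p) p"
      by (intro continuous_intros)
    moreover have "isCont (\<lambda>t. \<Psi> (max 0 t)) (fst p * snd p)"
      using continuous_on_kernel_extension by (simp add: continuous_on_eq_continuous_at)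
    ultimately have "isCont (\<lambda>p. \<Psi> (max 0 (fst p * snd p))) p"
      by (rule isCont_o2)
    then show ?thesis
      by (intro continuous_intros)
  qed
  from conv_prob_continuous_map[OF M U _ U_lim conv_prob_deterministic[OF dim_over_bandwidth_sq_tendsto] this]
  show ?thesis
    using \<open>0 \<le> c\<close> C0_pos by simp
qed

lemma conv_prob_gamma_hat:
  fixes M :: "nat \<Rightarrow> 'a measure" and Z :: "nat \<Rightarrow> 'a \<Rightarrow> nat \<Rightarrow> real"
    and Xs :: "nat \<Rightarrow> nat \<Rightarrow> 'a \<Rightarrow> nat \<Rightarrow> real"
  assumes M: "\<And>d. prob_space (M d)"
    and Z: "\<And>d. Z d \<in> measurable (M d) (vecspace d)"
    and Xs: "\<And>d l. l \<in> {1..N} \<Longrightarrow> Xs d l \<in> measurable (M d) (vecspace d)"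
    and dist_lim: "\<And>l. l \<in> {1..N} \<Longrightarrow> conv_prob M (\<lambda>d \<omega>. sqdist d (Z d \<omega>) (Xs d l \<omega>) / real d) (c l)"
    and c_nonneg: "\<And>l. l \<in> {1..N} \<Longrightarrow> 0 \<le> c l"
  shows "conv_prob M (\<lambda>d \<omega>. gamma_hat \<Psi> (h d) d N (\<lambda>l. Xs d l \<omega>) (Z d \<omega>) / real d)
    ((\<Sum>l=1..N. \<Psi> (c l / C0) * c l) / real N)"
proof -
  define U where "U l d \<omega> = sqdist d (Z d \<omega>) (Xs d l \<omega>) / real d" for l d \<omega>
  define T where "T l d \<omega> = \<Psi> (max 0 (U l d \<omega> * (real d / (h d)^2))) * U l d \<omega>" for l d \<omega>
  have U_meas: "U l d \<in> borel_measurable (M d)" if "l \<in> {1..N}" for l d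
    unfolding U_def using borel_measurable_sqdist[OF Z Xs[OF that]] by measurable
  have T_meas: "T l d \<in> borel_measurable (M d)" if "l \<in> {1..N}" for l d
    unfolding T_def using borel_measurable_continuous_on[OF continuous_on_kernel_extension] U_meas[OF that]
    by measurable
  have "conv_prob M (T l) (\<Psi> (c l / C0) * c l)" if "l \<in> {1..N}" for l
    unfolding T_def
    by (rule conv_prob_kernel_term[OF M U_meas[OF that] dist_lim[OF that, folded U_def] c_nonneg[OF that]])
  then have "conv_prob M (\<lambda>d \<omega>. \<Sum>l\<in>{1..N}. T l d \<omega>) (\<Sum>l\<in>{1..N}. \<Psi> (c l / C0) * c l)"
    using T_meas by (intro conv_prob_sum[OF M]) auto
  then have limit: "conv_prob M (\<lambda>d \<omega>. (\<Sum>l\<in>{1..N}. T l d \<omega>) / real N)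
      ((\<Sum>l=1..N. \<Psi> (c l / C0) * c l) / real N)"
    using T_meas by (intro conv_prob_divide_const[OF M] borel_measurable_sum) auto
  have "eventually (\<lambda>d. \<forall>\<omega>\<in>space (M d). (\<Sum>l\<in>{1..N}. T l d \<omega>) / real N
      = gamma_hat \<Psi> (h d) d N (\<lambda>l. Xs d l \<omega>) (Z d \<omega>) / real d) sequentially"
    using eventually_bandwidth_gt_1 eventually_gt_at_top[of 0]
  proof eventually_elim
    case (elim d)
    have "0 \<le> U l d \<omega> * (real d / (h d)^2)" for l \<omega>
      unfolding U_def by (simp add: sqdist_nonneg)
    then show ?case
      using elim by (simp add: gamma_hat_div_dim T_def U_def)
  qed
  from conv_prob_eventually_cong[OF this] limit show ?thesis
    by simp
qed

end

section \<open>Limits in the high-dimensional model\<close>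

locale hdlss_populations =
  fixes J :: nat and F :: "nat \<Rightarrow> nat \<Rightarrow> (nat \<Rightarrow> real) measure"
    and sigma2 :: "nat \<Rightarrow> real" and nu2 :: "nat \<Rightarrow> nat \<Rightarrow> real"
  assumes F_mom: "\<And>d j k. j \<in> {1..J} \<Longrightarrow> k < d \<Longrightarrow> integrable (F d j) (\<lambda>x. (x k)^2)"
    and A1b: "\<And>j j'. j \<in> {1..J} \<Longrightarrow> j' \<in> {1..J} \<Longrightarrow>
       conv_prob (\<lambda>d. F d j \<Otimes>\<^sub>M F d j')
         (\<lambda>d (x, y). (1 / real d) * (\<Sum>k<d. (x k - y k)^2)
             - (\<integral>(x', y'). (1 / real d) * (\<Sum>k<d. (x' k - y' k)^2) \<partial>(F d j \<Otimes>\<^sub>M F d j'))) 0"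
    and A2a: "\<And>j. j \<in> {1..J} \<Longrightarrow> ((\<lambda>d. trace_cov (F d j) d / real d) \<longlongrightarrow> sigma2 j) sequentially"
    and A2b: "\<And>j j'. j \<in> {1..J} \<Longrightarrow> j' \<in> {1..J} \<Longrightarrow> j \<noteq> j' \<Longrightarrow>
       ((\<lambda>d. (\<Sum>k<d. (mean_vec (F d j) d k - mean_vec (F d j') d k)^2) / real d) \<longlongrightarrow> nu2 j j') sequentially"
begin

definition sqdist_limit :: "nat \<Rightarrow> nat \<Rightarrow> real" where
  "sqdist_limit j k = sigma2 j + sigma2 k + (if j = k then 0 else nu2 j k)"

lemma theta0_eq_sqdist_limit: "theta0 \<Psi> C0 sigma2 nu2 j k = \<Psi> (sqdist_limit j k / C0) * sqdist_limit j k"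
  unfolding theta0_def sqdist_limit_def Let_def ..

lemma sqdist_limit_nonneg:
  assumes "j \<in> {1..J}" "k \<in> {1..J}"
  shows "0 \<le> sqdist_limit j k"
proof -
  have "0 \<le> sigma2 j" if "j \<in> {1..J}" for j
    using A2a[OF that]
    by (rule LIMSEQ_le_const) (auto simp: trace_cov_def intro!: sum_nonneg divide_nonneg_nonneg)
  moreover have "0 \<le> nu2 j k" if "j \<noteq> k"
    using A2b[OF assms that] by (rule LIMSEQ_le_const) (auto intro!: sum_nonneg divide_nonneg_nonneg)
  ultimately show ?thesis
    using assms unfolding sqdist_limit_def by auto
qed

lemma conv_prob_sqdist:
  fixes M :: "nat \<Rightarrow> 'a measure" and P Q :: "nat \<Rightarrow> 'a \<Rightarrow> nat \<Rightarrow> real"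
  assumes M: "\<And>d. prob_space (M d)" and j: "j \<in> {1..J}" and k: "k \<in> {1..J}"
    and P: "\<And>d. P d \<in> measurable (M d) (vecspace d)" and Q: "\<And>d. Q d \<in> measurable (M d) (vecspace d)"
    and P_distr: "\<And>d. distr (M d) (vecspace d) (P d) = F d j"
    and Q_distr: "\<And>d. distr (M d) (vecspace d) (Q d) = F d k"
    and ind: "\<And>d. prob_space.indep_var (M d) (vecspace d) (P d) (vecspace d) (Q d)"
  shows "conv_prob M (\<lambda>d \<omega>. sqdist d (P d \<omega>) (Q d \<omega>) / real d) (sqdist_limit j k)"
proof -
  define f where "f d = (\<lambda>(x, y). (1 / real d) * (\<Sum>i<d. (x i - y i)^2))" for d
  define E where "E d = integral\<^sup>L (F d j \<Otimes>\<^sub>M F d k) (f d)" for d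
  have f_meas: "f d \<in> borel_measurable (vecspace d \<Otimes>\<^sub>M vecspace d)" for d
    unfolding f_def vecspace_def by measurable
  have PQ: "(\<lambda>\<omega>. (P d \<omega>, Q d \<omega>)) \<in> measurable (M d) (vecspace d \<Otimes>\<^sub>M vecspace d)" for d
    using P Q by measurable
  have joint: "distr (M d) (vecspace d \<Otimes>\<^sub>M vecspace d) (\<lambda>\<omega>. (P d \<omega>, Q d \<omega>)) = F d j \<Otimes>\<^sub>M F d k" for d
  proof -
    interpret prob_space "M d" by (rule M)
    show ?thesis
      using ind[of d] unfolding indep_var_distribution_eq P_distr Q_distr by simp
  qed
  have E_eq: "E d = (trace_cov (F d j) d + trace_cov (F d k) d
      + (\<Sum>i<d. (mean_vec (F d j) d i - mean_vec (F d k) d i)^2)) / real d" for d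
  proof -
    interpret prob_space "M d" by (rule M)
    show ?thesis
      using integral_sqdist_indep[OF P Q ind] F_mom j k
      unfolding E_def f_def P_distr Q_distr by simp
  qed
  have E_lim: "(E \<longlongrightarrow> sqdist_limit j k) sequentially"
  proof -
    have "((\<lambda>d. (\<Sum>i<d. (mean_vec (F d j) d i - mean_vec (F d k) d i)^2) / real d)
        \<longlongrightarrow> (if j = k then 0 else nu2 j k)) sequentially"
      using A2b[OF j k] by (cases "j = k") auto
    then show ?thesis
      unfolding E_eq sqdist_limit_def add_divide_distrib by (intro tendsto_add A2a j k)
  qed
  have centred_meas: "(\<lambda>z. f d z - E d) \<in> borel_measurable (vecspace d \<Otimes>\<^sub>M vecspace d)" for d
    using f_meas by measurable
  have "conv_prob (\<lambda>d. F d j \<Otimes>\<^sub>M F d k) (\<lambda>d z. f d z - E d) 0"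
    using A1b[OF j k] unfolding f_def E_def by (simp add: case_prod_unfold)
  then have "conv_prob M (\<lambda>d \<omega>. f d (P d \<omega>, Q d \<omega>) - E d) 0"
    unfolding joint[symmetric] conv_prob_distr[OF PQ centred_meas] .
  then have "conv_prob M (\<lambda>d \<omega>. (f d (P d \<omega>, Q d \<omega>) - E d) + E d) (0 + sqdist_limit j k)"
    using PQ f_meas by (intro conv_prob_add[OF M] conv_prob_deterministic[OF E_lim]) auto
  then show ?thesis
    by (simp add: f_def sqdist_def)
qed

end

locale hdlss_setting = hdlss_populations J F sigma2 nu2 + kernel_bandwidth \<Psi> h C0
  for J F sigma2 nu2 \<Psi> h C0
begin

lemma conv_prob_gamma_hat_new_point:
  fixes M :: "nat \<Rightarrow> 'a measure" and Z :: "nat \<Rightarrow> 'a \<Rightarrow> nat \<Rightarrow> real"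
    and Xs :: "nat \<Rightarrow> nat \<Rightarrow> 'a \<Rightarrow> nat \<Rightarrow> real"
  assumes M: "\<And>d. prob_space (M d)" and j: "j \<in> {1..J}" and k: "k \<in> {1..J}" and N: "0 < N"
    and Z: "\<And>d. Z d \<in> measurable (M d) (vecspace d)"
    and Z_distr: "\<And>d. distr (M d) (vecspace d) (Z d) = F d j"
    and Xs: "\<And>d l. l \<in> {1..N} \<Longrightarrow> Xs d l \<in> measurable (M d) (vecspace d)"
    and Xs_distr: "\<And>d l. l \<in> {1..N} \<Longrightarrow> distr (M d) (vecspace d) (Xs d l) = F d k"
    and ind: "\<And>d l. l \<in> {1..N} \<Longrightarrow> prob_space.indep_var (M d) (vecspace d) (Z d) (vecspace d) (Xs d l)"
  shows "conv_prob M (\<lambda>d \<omega>. gamma_hat \<Psi> (h d) d N (\<lambda>l. Xs d l \<omega>) (Z d \<omega>) / real d)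
    (theta0 \<Psi> C0 sigma2 nu2 j k)"
proof -
  have "conv_prob M (\<lambda>d \<omega>. gamma_hat \<Psi> (h d) d N (\<lambda>l. Xs d l \<omega>) (Z d \<omega>) / real d)
      ((\<Sum>l=1..N. \<Psi> (sqdist_limit j k / C0) * sqdist_limit j k) / real N)"
    using sqdist_limit_nonneg[OF j k]
    by (intro conv_prob_gamma_hat[OF M Z Xs] conv_prob_sqdist[OF M j k Z Xs Z_distr Xs_distr ind])
  then show ?thesis
    using N by (simp add: theta0_eq_sqdist_limit)
qed

lemma conv_prob_gamma_hat_sample_point:
  fixes M :: "nat \<Rightarrow> 'a measure" and Xs :: "nat \<Rightarrow> nat \<Rightarrow> 'a \<Rightarrow> nat \<Rightarrow> real"
  assumes M: "\<And>d. prob_space (M d)" and j: "j \<in> {1..J}" and i: "i \<in> {1..N}"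
    and Xs: "\<And>d l. l \<in> {1..N} \<Longrightarrow> Xs d l \<in> measurable (M d) (vecspace d)"
    and Xs_distr: "\<And>d l. l \<in> {1..N} \<Longrightarrow> distr (M d) (vecspace d) (Xs d l) = F d j"
    and ind: "\<And>d l. l \<in> {1..N} \<Longrightarrow> l \<noteq> i \<Longrightarrow>
      prob_space.indep_var (M d) (vecspace d) (Xs d i) (vecspace d) (Xs d l)"
  shows "conv_prob M (\<lambda>d \<omega>. gamma_hat \<Psi> (h d) d N (\<lambda>l. Xs d l \<omega>) (Xs d i \<omega>) / real d)
    ((1 - 1 / real N) * theta0 \<Psi> C0 sigma2 nu2 j j)"
proof -
  define c where "c l = (if l = i then 0 else sqdist_limit j j)" for l
  have "conv_prob M (\<lambda>d \<omega>. sqdist d (Xs d i \<omega>) (Xs d l \<omega>) / real d) (c l)" if l: "l \<in> {1..N}" for l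
  proof (cases "l = i")
    case True
    then show ?thesis using conv_prob_zero unfolding c_def by simp
  next
    case False
    then show ?thesis
      using conv_prob_sqdist[OF M j j Xs[OF i] Xs[OF l] Xs_distr[OF i] Xs_distr[OF l] ind[OF l]]
      unfolding c_def by simp
  qed
  then have limit: "conv_prob M (\<lambda>d \<omega>. gamma_hat \<Psi> (h d) d N (\<lambda>l. Xs d l \<omega>) (Xs d i \<omega>) / real d)
      ((\<Sum>l=1..N. \<Psi> (c l / C0) * c l) / real N)"
    using sqdist_limit_nonneg[OF j j] unfolding c_def by (intro conv_prob_gamma_hat[OF M Xs[OF i] Xs]) auto
  have sum_eq: "(\<Sum>l=1..N. \<Psi> (c l / C0) * c l) = (real N - 1) * theta0 \<Psi> C0 sigma2 nu2 j j"
  proof -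
    have "(\<Sum>l=1..N. \<Psi> (c l / C0) * c l) = (\<Sum>l\<in>{1..N} - {i}. \<Psi> (sqdist_limit j j / C0) * sqdist_limit j j)"
      using i by (subst sum.remove[of _ i]) (auto simp: c_def)
    then show ?thesis
      using i by (simp add: theta0_eq_sqdist_limit of_nat_diff)
  qed
  have "(real N - 1) * theta0 \<Psi> C0 sigma2 nu2 j j / real N = (1 - 1 / real N) * theta0 \<Psi> C0 sigma2 nu2 j j"
    using i by (simp add: field_simps)
  with limit show ?thesis
    unfolding sum_eq by simp
qed

end

theorem theorem4:
  fixes J :: nat and n :: "nat \<Rightarrow> nat"
    and F :: "nat \<Rightarrow> nat \<Rightarrow> (nat \<Rightarrow> real) measure"
    and M :: "nat \<Rightarrow> 'a measure"
    and X :: "nat \<Rightarrow> nat \<Rightarrow> nat \<Rightarrow> 'a \<Rightarrow> (nat \<Rightarrow> real)"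
    and \<Psi> :: "real \<Rightarrow> real" and h :: "nat \<Rightarrow> real" and C0 :: real
    and sigma2 :: "nat \<Rightarrow> real" and nu2 :: "nat \<Rightarrow> nat \<Rightarrow> real"
  assumes J: "J \<ge> 2"
    and n: "\<forall>j\<in>{1..J}. n j \<ge> 2"
    \<comment> \<open>distributions on R^d with finite second moments\<close>
    and F_prob: "\<forall>d. \<forall>j\<in>{1..J}. prob_space (F d j) \<and> sets (F d j) = sets (vecspace d)"
    and F_mom: "\<forall>d. \<forall>j\<in>{1..J}. \<forall>k<d. integrable (F d j) (\<lambda>x. (x k)^2)"
    \<comment> \<open>(A1)\<close>
    and A1a: "\<forall>j\<in>{1..J}. \<forall>j'\<in>{1..J}.
       conv_prob (\<lambda>d. F d j \<Otimes>\<^sub>M (F d j' \<Otimes>\<^sub>M F d j'))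
         (\<lambda>d (x, y, z). (1 / real d) * (\<Sum>k<d. (x k - y k) * (x k - z k))
             - (\<integral>(x', y', z'). (1 / real d) * (\<Sum>k<d. (x' k - y' k) * (x' k - z' k))
                  \<partial>(F d j \<Otimes>\<^sub>M (F d j' \<Otimes>\<^sub>M F d j')))) 0"
    and A1b: "\<forall>j\<in>{1..J}. \<forall>j'\<in>{1..J}.
       conv_prob (\<lambda>d. F d j \<Otimes>\<^sub>M F d j')
         (\<lambda>d (x, y). (1 / real d) * (\<Sum>k<d. (x k - y k)^2)
             - (\<integral>(x', y'). (1 / real d) * (\<Sum>k<d. (x' k - y' k)^2) \<partial>(F d j \<Otimes>\<^sub>M F d j'))) 0"
    \<comment> \<open>(A2)\<close>
    and A2a: "\<forall>j\<in>{1..J}. ((\<lambda>d. trace_cov (F d j) d / real d) \<longlongrightarrow> sigma2 j) sequentially"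
    and A2b: "\<forall>j\<in>{1..J}. \<forall>j'\<in>{1..J}. j \<noteq> j' \<longrightarrow>
       ((\<lambda>d. (\<Sum>k<d. (mean_vec (F d j) d k - mean_vec (F d j') d k)^2) / real d)
          \<longlongrightarrow> nu2 j j') sequentially"
    \<comment> \<open>independent iid samples\<close>
    and M: "\<forall>d. prob_space (M d)"
    and X_meas: "\<forall>d. \<forall>j\<in>{1..J}. \<forall>i\<in>{1..n j}. X d j i \<in> measurable (M d) (vecspace d)"
    and X_dist: "\<forall>d. \<forall>j\<in>{1..J}. \<forall>i\<in>{1..n j}. distr (M d) (vecspace d) (X d j i) = F d j"
    and X_indep: "\<forall>d. prob_space.indep_vars (M d) (\<lambda>_. vecspace d) (\<lambda>(j, i). X d j i)
                        {(j, i). j \<in> {1..J} \<and> i \<in> {1..n j}}"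
    \<comment> \<open>kernel function and bandwidth\<close>
    and Psi_cont: "continuous_on {0..} \<Psi>"
    and Psi_nonneg: "\<forall>t\<ge>0. \<Psi> t \<ge> 0"
    and Psi_decr: "\<forall>s t. 0 \<le> s \<longrightarrow> s \<le> t \<longrightarrow> \<Psi> t \<le> \<Psi> s"
    and h_pos: "\<forall>d. h d > 0"
    and C0: "C0 > 0"
    and h_lim: "((\<lambda>d. (h d)^2 / real d) \<longlongrightarrow> C0) sequentially"
  shows
    "(\<forall>j\<in>{1..J}. \<forall>i\<in>{1..n j}. \<forall>k\<in>{1..J}.
        conv_prob M (\<lambda>d \<omega>. gamma_hat \<Psi> (h d) d (n k) (\<lambda>l. X d k l \<omega>) (X d j i \<omega>) / real d)
          (if k = j then (1 - 1 / real (n j)) * theta0 \<Psi> C0 sigma2 nu2 j j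
           else theta0 \<Psi> C0 sigma2 nu2 j k))
     \<and>
     (\<forall>i0\<in>{1..J}. \<forall>Z :: nat \<Rightarrow> 'a \<Rightarrow> (nat \<Rightarrow> real).
        (\<forall>d. Z d \<in> measurable (M d) (vecspace d) \<and> distr (M d) (vecspace d) (Z d) = F d i0 \<and>
             prob_space.indep_vars (M d) (\<lambda>_. vecspace d)
               (\<lambda>q. case q of None \<Rightarrow> Z d | Some (j, i) \<Rightarrow> X d j i)
               (insert None (Some ` {(j, i). j \<in> {1..J} \<and> i \<in> {1..n j}})))
        \<longrightarrow> (\<forall>k\<in>{1..J}.
              conv_prob M (\<lambda>d \<omega>. gamma_hat \<Psi> (h d) d (n k) (\<lambda>l. X d k l \<omega>) (Z d \<omega>) / real d)
                (theta0 \<Psi> C0 sigma2 nu2 i0 k)))"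
proof -
  interpret hdlss_setting J F sigma2 nu2 \<Psi> h C0
    using F_mom A1b A2a A2b Psi_cont h_pos C0 h_lim by unfold_locales auto
  have M': "\<And>d. prob_space (M d)" using M by blast
  have n_pos: "0 < n k" if "k \<in> {1..J}" for k using n that by fastforce
  have X_pair_indep: "prob_space.indep_var (M d) (vecspace d) (X d j i) (vecspace d) (X d k l)"
    if "j \<in> {1..J}" "i \<in> {1..n j}" "k \<in> {1..J}" "l \<in> {1..n k}" "(j, i) \<noteq> (k, l)" for d j i k l
    using prob_space.indep_vars_imp_indep_var[OF M'[of d] X_indep[rule_format, of d], of "(j, i)" "(k, l)"]
      that by auto
  show ?thesis
  proof (intro conjI ballI allI impI)
    fix j i k assume j: "j \<in> {1..J}" and i: "i \<in> {1..n j}" and k: "k \<in> {1..J}"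
    show "conv_prob M (\<lambda>d \<omega>. gamma_hat \<Psi> (h d) d (n k) (\<lambda>l. X d k l \<omega>) (X d j i \<omega>) / real d)
      (if k = j then (1 - 1 / real (n j)) * theta0 \<Psi> C0 sigma2 nu2 j j else theta0 \<Psi> C0 sigma2 nu2 j k)"
      using conv_prob_gamma_hat_sample_point[OF M' j i, where Xs = "\<lambda>d. X d j"]
        conv_prob_gamma_hat_new_point[OF M' j k n_pos[OF k], where Z = "\<lambda>d. X d j i" and Xs = "\<lambda>d. X d k"]
        X_meas X_dist X_pair_indep j i k by auto
  next
    fix i0 k and Z :: "nat \<Rightarrow> 'a \<Rightarrow> nat \<Rightarrow> real"
    assume i0: "i0 \<in> {1..J}" and Z: "\<forall>d. Z d \<in> measurable (M d) (vecspace d) \<and>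
      distr (M d) (vecspace d) (Z d) = F d i0 \<and> prob_space.indep_vars (M d) (\<lambda>_. vecspace d)
        (\<lambda>q. case q of None \<Rightarrow> Z d | Some (j, i) \<Rightarrow> X d j i)
        (insert None (Some ` {(j, i). j \<in> {1..J} \<and> i \<in> {1..n j}}))"
      and k: "k \<in> {1..J}"
    have "prob_space.indep_var (M d) (vecspace d) (Z d) (vecspace d) (X d k l)" if "l \<in> {1..n k}" for d l
      using prob_space.indep_vars_imp_indep_var[OF M'[of d] conjunct2[OF conjunct2[OF Z[rule_format, of d]]],
          of None "Some (k, l)"] k that by auto
    with Z X_meas X_dist k show "conv_prob M (\<lambda>d \<omega>. gamma_hat \<Psi> (h d) d (n k) (\<lambda>l. X d k l \<omega>) (Z d \<omega>) / real d)
        (theta0 \<Psi> C0 sigma2 nu2 i0 k)"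
      by (intro conv_prob_gamma_hat_new_point[OF M' i0 k n_pos[OF k]]) auto
  qed
qed

end
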